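(* Let $(f^*,g^* )$ be a stationary $\hat\alpha$-discounted Nash equilibrium of a two-player continuous time stochastic game for some $\hat\alpha>0$, with $\|\mu\|>0$, and suppose: (N1) $(f^*,g^* )$ is pure, i.e. for each $s\in S$ there are $a^1_s\in A^1(s)$, $a^2_s\in A^2(s)$ with $f^*(s,a^1_s)=1$, $g^*(s,a^2_s)=1$; (N2) $Q(f^*,g^* )=0$, i.e. every state is absorbing under $(f^*,g^* )$; (N3) for all $s\in S$, $a^1\in A^1(s)$: $r^1(s,a^1,a^2_s)\ge\sum_{s'}\left(\frac{\mu(s',s,a^1,a^2_s)}{\|\mu\|}+\delta(s,s')\right)r^1(s',a^1_{s'},a^2_{s'})$, and for all $s\in S$, $a^2\in A^2(s)$: $r^2(s,a^1_s,a^2)\ge\sum_{s'}\left(\frac{\mu(s',s,a^1_s,a^2)}{\|\mu\|}+\delta(s,s')\right)r^2(s',a^1_{s'},a^2_{s'})$. Then $(f^*,g^* )$ is a Blackwell-Nash equilibrium.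
   Context: A two-player continuous time stochastic game consists of a finite state set $S$, finite nonempty action sets $A^1(s),A^2(s)$, reward rates $r^i(s,a^1,a^2)$ ($i=1,2$), and transition rates $\mu(s',s,a^1,a^2)\ge0$ from $s$ to $s'\ne s$, with $\mu(s,s,a^1,a^2)=-\sum_{s'\ne s}\mu(s',s,a^1,a^2)$. Let $\|\mu\|=\max_{s,a^1,a^2}\sum_{s'\ne s}\mu(s',s,a^1,a^2)$ and let $\delta(s,s')$ be the Kronecker delta. Stationary strategies $f,g$ assign to each state a probability distribution on $A^1(s)$, resp. $A^2(s)$. For a stationary pair, $r^i(s,f,g)=\sum_{a^1,a^2}f(s,a^1)g(s,a^2)r^i(s,a^1,a^2)$ and $Q(f,g)$ is the generator matrix with $Q(f,g)_{ss'}=\sum_{a^1,a^2}f(s,a^1)g(s,a^2)\mu(s',s,a^1,a^2)$. For $\alpha>0$ the $\alpha$-discounted payoff is $v^i_\alpha(f,g)=(\alpha I-Q(f,g))^{-1}r^i(f,g)$ (equivalently $E^s_{f,g}\int_0^\infty e^{-\alpha t}r^i(s_t,f,g)dt$). A stationary pair $(f^*,g^* )$ is an $\alpha$-discounted Nash equilibrium if for all $s$, $v^1_\alpha(s,f^*,g^* )\ge v^1_\alpha(s,f,g^* )$ for all stationary $f$ and $v^2_\alpha(s,f^*,g^* )\ge v^2_\alpha(s,f^*,g)$ for all stationary $g$. It is a Blackwell-Nash equilibrium (BNE) if there is $\alpha_0>0$ such that it is an $\alpha$-discounted Nash equilibrium for all $\alpha\in(0,\alpha_0]$. *)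

theory Defs
  imports "HOL-Analysis.Analysis"
begin

text \<open>Two-player continuous time stochastic game. States form a finite type 's.
  A1 s, A2 s are the action sets; mu s' s a1 a2 is the transition rate from s to s'
  under (a1,a2); r1, r2 are reward rates.\<close>

definition ctsg ::
  "('s::finite \<Rightarrow> 'a set) \<Rightarrow> ('s \<Rightarrow> 'b set) \<Rightarrow> ('s \<Rightarrow> 's \<Rightarrow> 'a \<Rightarrow> 'b \<Rightarrow> real) \<Rightarrow> bool" where
  "ctsg A1 A2 mu \<longleftrightarrow>
     (\<forall>s. finite (A1 s) \<and> A1 s \<noteq> {} \<and> finite (A2 s) \<and> A2 s \<noteq> {}) \<and>
     (\<forall>s s' a1 a2. s' \<noteq> s \<longrightarrow> a1 \<in> A1 s \<longrightarrow> a2 \<in> A2 s \<longrightarrow> mu s' s a1 a2 \<ge> 0) \<and>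
     (\<forall>s a1 a2. a1 \<in> A1 s \<longrightarrow> a2 \<in> A2 s \<longrightarrow>
        mu s s a1 a2 = - (\<Sum>s'\<in>UNIV - {s}. mu s' s a1 a2))"

definition mu_norm ::
  "('s::finite \<Rightarrow> 'a set) \<Rightarrow> ('s \<Rightarrow> 'b set) \<Rightarrow> ('s \<Rightarrow> 's \<Rightarrow> 'a \<Rightarrow> 'b \<Rightarrow> real) \<Rightarrow> real" where
  "mu_norm A1 A2 mu =
     Max {(\<Sum>s'\<in>UNIV - {s}. mu s' s a1 a2) | s a1 a2. a1 \<in> A1 s \<and> a2 \<in> A2 s}"

definition stationary :: "('s \<Rightarrow> 'a set) \<Rightarrow> ('s \<Rightarrow> 'a \<Rightarrow> real) \<Rightarrow> bool" where
  "stationary A f \<longleftrightarrow> (\<forall>s. (\<forall>a\<in>A s. f s a \<ge> 0) \<and> (\<Sum>a\<in>A s. f s a) = 1)"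

definition rew ::
  "('s \<Rightarrow> 'a set) \<Rightarrow> ('s \<Rightarrow> 'b set) \<Rightarrow> ('s \<Rightarrow> 'a \<Rightarrow> 'b \<Rightarrow> real)
   \<Rightarrow> ('s \<Rightarrow> 'a \<Rightarrow> real) \<Rightarrow> ('s \<Rightarrow> 'b \<Rightarrow> real) \<Rightarrow> real ^ 's" where
  "rew A1 A2 r f g = (\<chi> s. \<Sum>a1\<in>A1 s. \<Sum>a2\<in>A2 s. f s a1 * g s a2 * r s a1 a2)"

definition genQ ::
  "('s::finite \<Rightarrow> 'a set) \<Rightarrow> ('s \<Rightarrow> 'b set) \<Rightarrow> ('s \<Rightarrow> 's \<Rightarrow> 'a \<Rightarrow> 'b \<Rightarrow> real)
   \<Rightarrow> ('s \<Rightarrow> 'a \<Rightarrow> real) \<Rightarrow> ('s \<Rightarrow> 'b \<Rightarrow> real) \<Rightarrow> real ^ 's ^ 's" where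
  "genQ A1 A2 mu f g = (\<chi> s s'. \<Sum>a1\<in>A1 s. \<Sum>a2\<in>A2 s. f s a1 * g s a2 * mu s' s a1 a2)"

definition disc_payoff ::
  "('s::finite \<Rightarrow> 'a set) \<Rightarrow> ('s \<Rightarrow> 'b set) \<Rightarrow> ('s \<Rightarrow> 's \<Rightarrow> 'a \<Rightarrow> 'b \<Rightarrow> real)
   \<Rightarrow> ('s \<Rightarrow> 'a \<Rightarrow> 'b \<Rightarrow> real) \<Rightarrow> real
   \<Rightarrow> ('s \<Rightarrow> 'a \<Rightarrow> real) \<Rightarrow> ('s \<Rightarrow> 'b \<Rightarrow> real) \<Rightarrow> real ^ 's" where
  "disc_payoff A1 A2 mu r \<alpha> f g =
     matrix_inv (\<alpha> *\<^sub>R mat 1 - genQ A1 A2 mu f g) *v rew A1 A2 r f g"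

definition disc_nash ::
  "('s::finite \<Rightarrow> 'a set) \<Rightarrow> ('s \<Rightarrow> 'b set) \<Rightarrow> ('s \<Rightarrow> 's \<Rightarrow> 'a \<Rightarrow> 'b \<Rightarrow> real)
   \<Rightarrow> ('s \<Rightarrow> 'a \<Rightarrow> 'b \<Rightarrow> real) \<Rightarrow> ('s \<Rightarrow> 'a \<Rightarrow> 'b \<Rightarrow> real) \<Rightarrow> real
   \<Rightarrow> ('s \<Rightarrow> 'a \<Rightarrow> real) \<Rightarrow> ('s \<Rightarrow> 'b \<Rightarrow> real) \<Rightarrow> bool" where
  "disc_nash A1 A2 mu r1 r2 \<alpha> fs gs \<longleftrightarrow>
     stationary A1 fs \<and> stationary A2 gs \<and>
     (\<forall>f. stationary A1 f \<longrightarrow> (\<forall>s.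
         disc_payoff A1 A2 mu r1 \<alpha> fs gs $ s \<ge> disc_payoff A1 A2 mu r1 \<alpha> f gs $ s)) \<and>
     (\<forall>g. stationary A2 g \<longrightarrow> (\<forall>s.
         disc_payoff A1 A2 mu r2 \<alpha> fs gs $ s \<ge> disc_payoff A1 A2 mu r2 \<alpha> fs g $ s))"

definition blackwell_nash ::
  "('s::finite \<Rightarrow> 'a set) \<Rightarrow> ('s \<Rightarrow> 'b set) \<Rightarrow> ('s \<Rightarrow> 's \<Rightarrow> 'a \<Rightarrow> 'b \<Rightarrow> real)
   \<Rightarrow> ('s \<Rightarrow> 'a \<Rightarrow> 'b \<Rightarrow> real) \<Rightarrow> ('s \<Rightarrow> 'a \<Rightarrow> 'b \<Rightarrow> real)
   \<Rightarrow> ('s \<Rightarrow> 'a \<Rightarrow> real) \<Rightarrow> ('s \<Rightarrow> 'b \<Rightarrow> real) \<Rightarrow> bool" where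
  "blackwell_nash A1 A2 mu r1 r2 fs gs \<longleftrightarrow>
     (\<exists>\<alpha>0>0. \<forall>\<alpha>. 0 < \<alpha> \<and> \<alpha> \<le> \<alpha>0 \<longrightarrow> disc_nash A1 A2 mu r1 r2 \<alpha> fs gs)"

end

theory Submission
  imports Defs
begin

(* Fixing the opponent's pure strategy turns each player's problem into a continuous time Markov
   decision problem in which the equilibrium action bs is absorbing, so its alpha-discounted payoff
   is u/alpha with u s = rho s (bs s).  Optimality at alpha_h against one-shot deviations gives
   alpha_h (rho s b - u s) <= - M s b with M s b = sum_j m j s b * u j, while (N3) says
   M s b / norm mu <= rho s b - u s.  Together they force M s b <= 0 and hence
   alpha (rho s b - u s) <= - M s b for every alpha <= alpha_h, i.e. u/alpha is a supersolution of
   the Bellman equation; the maximum principle for the resolvent of a Q-matrix then bounds every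
   stationary payoff by u/alpha. *)

definition q_matrix :: "real^'n::finite^'n \<Rightarrow> bool" where
  "q_matrix Q \<longleftrightarrow> (\<forall>i j. i \<noteq> j \<longrightarrow> 0 \<le> Q$i$j) \<and> (\<forall>i. (\<Sum>j\<in>UNIV. Q$i$j) = 0)"

lemma resolvent_mult_vec_nth:
  fixes Q :: "real^'n::finite^'n"
  shows "((\<alpha> *\<^sub>R mat 1 - Q) *v v) $ i = \<alpha> * v$i - (\<Sum>j\<in>UNIV. Q$i$j * v$j)"
proof -
  have "((\<alpha> *\<^sub>R mat 1 - Q) *v v) $ i = (\<Sum>j\<in>UNIV. (if i = j then \<alpha> * v$j else 0) - Q$i$j * v$j)"
    unfolding matrix_vector_mult_def by (auto simp: mat_def left_diff_distrib intro!: sum.cong)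
  then show ?thesis
    by (simp add: sum_subtractf)
qed

lemma q_matrix_max_principle:
  fixes Q :: "real^'n::finite^'n"
  assumes Q: "q_matrix Q" and "\<alpha> > 0" and sub: "\<And>i. ((\<alpha> *\<^sub>R mat 1 - Q) *v d) $ i \<le> 0"
  shows "d$i \<le> 0"
proof -
  have "Max (range (\<lambda>j. d$j)) \<in> range (\<lambda>j. d$j)"
    by (rule Max_in) auto
  then obtain k where "d$k = Max (range (\<lambda>j. d$j))"
    by (metis imageE)
  then have k: "\<And>j. d$j \<le> d$k"
    by simp
  have "(\<Sum>j\<in>UNIV. Q$k$j * d$j) = (\<Sum>j\<in>UNIV. Q$k$j * (d$j - d$k)) + (\<Sum>j\<in>UNIV. Q$k$j) * d$k"
    by (simp add: right_diff_distrib sum_subtractf sum_distrib_right)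
  also have "\<dots> = (\<Sum>j\<in>UNIV. Q$k$j * (d$j - d$k))"
    using Q by (simp add: q_matrix_def)
  also have "\<dots> \<le> 0"
  proof (rule sum_nonpos)
    fix j
    show "Q$k$j * (d$j - d$k) \<le> 0"
      using Q k[of j] by (cases "j = k") (auto simp: q_matrix_def intro: mult_nonneg_nonpos)
  qed
  finally have "\<alpha> * d$k \<le> 0"
    using sub[of k] resolvent_mult_vec_nth[of \<alpha> Q d k] by linarith
  with \<open>\<alpha> > 0\<close> have "d$k \<le> 0"
    by (simp add: mult_le_0_iff)
  with k show ?thesis
    by (meson order_trans)
qed

lemma q_matrix_resolvent_right_inverse:
  fixes Q :: "real^'n::finite^'n"
  assumes "q_matrix Q" and "\<alpha> > 0"
  shows "(\<alpha> *\<^sub>R mat 1 - Q) *v (matrix_inv (\<alpha> *\<^sub>R mat 1 - Q) *v y) = y"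
proof -
  let ?A = "\<alpha> *\<^sub>R mat 1 - Q"
  have "inj ((*v) ?A)"
  proof (rule injI)
    fix x z
    assume "?A *v x = ?A *v z"
    then have "?A *v (x - z) = 0" "?A *v (z - x) = 0"
      by (simp_all add: matrix_vector_mult_diff_distrib)
    then have "(x - z)$i \<le> 0" "(z - x)$i \<le> 0" for i
      using q_matrix_max_principle[OF assms] by (metis order_refl zero_index)+
    then show "x = z"
      by (simp add: vec_eq_iff antisym)
  qed
  then have "invertible ?A"
    using matrix_left_invertible_injective invertible_left_inverse by blast
  then have "?A ** matrix_inv ?A = mat 1"
    unfolding invertible_def matrix_inv_def by (rule someI_ex[THEN conjunct1])
  then show ?thesis
    by (metis matrix_vector_mul_assoc matrix_vector_mul_lid)
qed

lemma q_matrix_resolvent_le: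
  fixes Q :: "real^'n::finite^'n"
  assumes "q_matrix Q" and "\<alpha> > 0" and super: "\<And>i. y$i \<le> ((\<alpha> *\<^sub>R mat 1 - Q) *v w) $ i"
  shows "(matrix_inv (\<alpha> *\<^sub>R mat 1 - Q) *v y) $ i \<le> w$i"
proof -
  let ?v = "matrix_inv (\<alpha> *\<^sub>R mat 1 - Q) *v y"
  have "((\<alpha> *\<^sub>R mat 1 - Q) *v (?v - w)) $ j \<le> 0" for j
    using super[of j] q_matrix_resolvent_right_inverse[OF assms(1,2)]
    by (simp add: matrix_vector_mult_diff_distrib)
  then show ?thesis
    using q_matrix_max_principle[OF assms(1,2)] by fastforce
qed

definition mdp_gen ::
  "('s::finite \<Rightarrow> 'c set) \<Rightarrow> ('s \<Rightarrow> 's \<Rightarrow> 'c \<Rightarrow> real) \<Rightarrow> ('s \<Rightarrow> 'c \<Rightarrow> real) \<Rightarrow> real^'s^'s" where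
  "mdp_gen B m h = (\<chi> s s'. \<Sum>b\<in>B s. h s b * m s' s b)"

definition mdp_rew ::
  "('s::finite \<Rightarrow> 'c set) \<Rightarrow> ('s \<Rightarrow> 'c \<Rightarrow> real) \<Rightarrow> ('s \<Rightarrow> 'c \<Rightarrow> real) \<Rightarrow> real^'s" where
  "mdp_rew B \<rho> h = (\<chi> s. \<Sum>b\<in>B s. h s b * \<rho> s b)"

definition mdp_payoff ::
  "('s::finite \<Rightarrow> 'c set) \<Rightarrow> ('s \<Rightarrow> 's \<Rightarrow> 'c \<Rightarrow> real) \<Rightarrow> ('s \<Rightarrow> 'c \<Rightarrow> real) \<Rightarrow> real
   \<Rightarrow> ('s \<Rightarrow> 'c \<Rightarrow> real) \<Rightarrow> real^'s" where
  "mdp_payoff B m \<rho> \<alpha> h = matrix_inv (\<alpha> *\<^sub>R mat 1 - mdp_gen B m h) *v mdp_rew B \<rho> h"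

lemma stationary_point_mass_sum:
  assumes "stationary A f" and "finite (A s)" and "a \<in> A s" and "f s a = 1"
  shows "(\<Sum>x\<in>A s. f s x * c x) = c a"
proof -
  have "sum (f s) (A s - {a}) = 0"
    using assms sum.remove[of "A s" a "f s"] by (simp add: stationary_def)
  then have "\<forall>x\<in>A s - {a}. f s x = 0"
    using assms(1,2) sum_nonneg_eq_0_iff[of "A s - {a}" "f s"] by (simp add: stationary_def)
  then show ?thesis
    using assms(2-4) sum.remove[of "A s" a "\<lambda>x. f s x * c x"] by simp
qed

lemma discount_bound_mono:
  fixes x M N \<alpha> \<beta> :: real
  assumes "\<beta> * x \<le> - M" and "M / N \<le> x" and "0 < N" and "0 < \<alpha>" and "\<alpha> \<le> \<beta>"
  shows "\<alpha> * x \<le> - M"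
proof (cases "x \<le> 0")
  case True
  with assms(2) have "M / N \<le> 0"
    by linarith
  with \<open>0 < N\<close> have "M \<le> 0"
    by (simp add: divide_le_0_iff)
  moreover from True \<open>0 < \<alpha>\<close> have "\<alpha> * x \<le> 0"
    by (simp add: mult_nonneg_nonpos)
  ultimately show ?thesis
    by linarith
next
  case False
  then have "\<alpha> * x \<le> \<beta> * x"
    using \<open>\<alpha> \<le> \<beta>\<close> by (simp add: mult_right_mono)
  with assms(1) show ?thesis
    by linarith
qed

locale ctmdp =
  fixes B :: "'s::finite \<Rightarrow> 'c set" and m :: "'s \<Rightarrow> 's \<Rightarrow> 'c \<Rightarrow> real"
  assumes finite_actions: "finite (B s)"
    and rate_nonneg: "s' \<noteq> s \<Longrightarrow> b \<in> B s \<Longrightarrow> 0 \<le> m s' s b"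
    and rate_diag: "b \<in> B s \<Longrightarrow> m s s b = - (\<Sum>s'\<in>UNIV - {s}. m s' s b)"
begin

lemma rate_row_sum: "b \<in> B s \<Longrightarrow> (\<Sum>s'\<in>UNIV. m s' s b) = 0"
  using rate_diag sum.remove[of UNIV s "\<lambda>s'. m s' s b"] by simp

lemma rate_diag_nonpos: "b \<in> B s \<Longrightarrow> m s s b \<le> 0"
  using rate_diag[of b s] rate_nonneg[of _ s b] sum_nonneg[of "UNIV - {s}" "\<lambda>s'. m s' s b"] by auto

lemma q_matrix_mdp_gen:
  assumes "stationary B h"
  shows "q_matrix (mdp_gen B m h)"
proof -
  have "(\<Sum>j\<in>UNIV. mdp_gen B m h $ s $ j) = (\<Sum>b\<in>B s. h s b * (\<Sum>j\<in>UNIV. m j s b))" for s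
    by (simp add: mdp_gen_def sum_distrib_left sum.swap[of _ UNIV])
  then show ?thesis
    using assms rate_nonneg rate_row_sum
    by (auto simp: q_matrix_def mdp_gen_def stationary_def intro!: sum_nonneg)
qed

lemma mdp_payoff_equation:
  assumes "stationary B h" and "\<alpha> > 0"
  shows "(\<alpha> *\<^sub>R mat 1 - mdp_gen B m h) *v mdp_payoff B m \<rho> \<alpha> h = mdp_rew B \<rho> h"
  unfolding mdp_payoff_def
  by (rule q_matrix_resolvent_right_inverse[OF q_matrix_mdp_gen[OF assms(1)] assms(2)])

lemma mdp_payoff_le_supersolution:
  assumes "\<alpha> > 0" and h: "stationary B h"
    and super: "\<And>s b. b \<in> B s \<Longrightarrow> \<rho> s b + (\<Sum>j\<in>UNIV. m j s b * w$j) \<le> \<alpha> * w$s"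
  shows "mdp_payoff B m \<rho> \<alpha> h $ s \<le> w$s"
  unfolding mdp_payoff_def
proof (rule q_matrix_resolvent_le[OF q_matrix_mdp_gen[OF h] \<open>\<alpha> > 0\<close>])
  fix s
  have "((\<alpha> *\<^sub>R mat 1 - mdp_gen B m h) *v w) $ s
      = (\<Sum>b\<in>B s. h s b) * (\<alpha> * w$s) - (\<Sum>b\<in>B s. h s b * (\<Sum>j\<in>UNIV. m j s b * w$j))"
    using h by (simp add: resolvent_mult_vec_nth stationary_def mdp_gen_def sum_distrib_left
        sum_distrib_right sum.swap[of _ UNIV] mult.assoc)
  also have "\<dots> = (\<Sum>b\<in>B s. h s b * (\<alpha> * w$s - (\<Sum>j\<in>UNIV. m j s b * w$j)))"
    by (simp add: sum_distrib_right right_diff_distrib sum_subtractf)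
  finally show "mdp_rew B \<rho> h $ s \<le> ((\<alpha> *\<^sub>R mat 1 - mdp_gen B m h) *v w) $ s"
    using h super by (auto simp: mdp_rew_def stationary_def intro!: sum_mono mult_left_mono
        simp flip: le_diff_eq)
qed

lemma mdp_payoff_absorbing:
  assumes h: "stationary B h" and "a \<in> B s" and "h s a = 1"
    and absorbing: "\<And>s'. m s' s a = 0" and "\<alpha> > 0"
  shows "mdp_payoff B m \<rho> \<alpha> h $ s = \<rho> s a / \<alpha>"
proof -
  have pure: "(\<Sum>c\<in>B s. h s c * f c) = f a" for f
    by (rule stationary_point_mass_sum[OF h finite_actions assms(2,3)])
  have "\<alpha> * mdp_payoff B m \<rho> \<alpha> h $ s = \<rho> s a"
    using arg_cong[OF mdp_payoff_equation[OF h \<open>\<alpha> > 0\<close>, of \<rho>], of "\<lambda>x. x$s"]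
    by (simp add: resolvent_mult_vec_nth mdp_gen_def mdp_rew_def pure absorbing)
  with \<open>\<alpha> > 0\<close> show ?thesis
    by (simp add: field_simps)
qed

lemma one_shot_deviation:
  assumes bs: "\<And>s. bs s \<in> B s" and absorbing: "\<And>s s'. m s' s (bs s) = 0" and "\<alpha> > 0"
    and opt: "\<And>h s. stationary B h \<Longrightarrow> mdp_payoff B m \<rho> \<alpha> h $ s \<le> \<rho> s (bs s) / \<alpha>"
    and b: "b \<in> B s0"
  shows "\<alpha> * \<rho> s0 b + (\<Sum>j\<in>UNIV. m j s0 b * \<rho> j (bs j)) \<le> \<alpha> * \<rho> s0 (bs s0)"
proof -
  define d where "d = bs(s0 := b)"
  define h where "h s c = (if c = d s then 1 else 0 :: real)" for s c
  have d: "d s \<in> B s" for s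
    using bs b by (simp add: d_def)
  have h: "stationary B h"
    using d finite_actions by (simp add: stationary_def h_def)
  define u where "u j = \<rho> j (bs j)" for j
  define v where "v = mdp_payoff B m \<rho> \<alpha> h"
  define w :: "real^'s" where "w = (\<chi> j. u j / \<alpha>)"
  define \<delta> where "\<delta> = v$s0 - w$s0"
  have "v$s = w$s" if "s \<noteq> s0" for s
  proof -
    have "h s (bs s) = 1"
      using that by (simp add: h_def d_def)
    from mdp_payoff_absorbing[OF h bs this absorbing \<open>\<alpha> > 0\<close>] show ?thesis
      by (simp add: v_def w_def u_def)
  qed
  then have vw: "v$j = w$j + (if j = s0 then \<delta> else 0)" for j
    by (simp add: \<delta>_def)
  have "(\<Sum>c\<in>B s0. h s0 c * f c) = f b" for f
    using stationary_point_mass_sum[OF h finite_actions d[of s0]] by (simp add: h_def d_def)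
  then have balance: "\<alpha> * v$s0 - (\<Sum>j\<in>UNIV. m j s0 b * v$j) = \<rho> s0 b"
    using arg_cong[OF mdp_payoff_equation[OF h \<open>\<alpha> > 0\<close>, of \<rho>], of "\<lambda>x. x$s0"]
    by (simp add: resolvent_mult_vec_nth mdp_gen_def mdp_rew_def v_def)
  have "(\<Sum>j\<in>UNIV. m j s0 b * v$j) = (\<Sum>j\<in>UNIV. m j s0 b * w$j + (if j = s0 then m j s0 b * \<delta> else 0))"
    by (intro sum.cong) (auto simp: vw algebra_simps)
  then have "(\<Sum>j\<in>UNIV. m j s0 b * v$j) = (\<Sum>j\<in>UNIV. m j s0 b * w$j) + m s0 s0 b * \<delta>"
    by (simp add: sum.distrib)
  then have "\<rho> s0 b = (\<alpha> * w$s0 - (\<Sum>j\<in>UNIV. m j s0 b * w$j)) + (\<alpha> - m s0 s0 b) * \<delta>"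
    using balance vw[of s0] by (simp add: algebra_simps)
  then have "\<alpha> * \<rho> s0 b = \<alpha> * (\<alpha> * w$s0 - (\<Sum>j\<in>UNIV. m j s0 b * w$j)) + \<alpha> * ((\<alpha> - m s0 s0 b) * \<delta>)"
    by (simp only: distrib_left)
  moreover have "\<alpha> * (\<alpha> * w$s0 - (\<Sum>j\<in>UNIV. m j s0 b * w$j)) = \<alpha> * u s0 - (\<Sum>j\<in>UNIV. m j s0 b * u j)"
    using \<open>\<alpha> > 0\<close> by (simp add: w_def right_diff_distrib sum_distrib_left)
  moreover have "\<delta> \<le> 0"
    using opt[OF h, of s0] by (simp add: \<delta>_def v_def w_def u_def)
  then have "\<alpha> * ((\<alpha> - m s0 s0 b) * \<delta>) \<le> 0"
    using rate_diag_nonpos[OF b] \<open>\<alpha> > 0\<close> by (simp add: mult_nonneg_nonpos)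
  ultimately show ?thesis
    unfolding u_def by linarith
qed

lemma absorbing_optimal_small_discount:
  assumes hs: "stationary B hs" and bs: "\<And>s. bs s \<in> B s" and hs_bs: "\<And>s. hs s (bs s) = 1"
    and absorbing: "\<And>s s'. m s' s (bs s) = 0"
    and "0 < \<alpha>" and "\<alpha> \<le> \<alpha>h" and "0 < N"
    and opt: "\<And>h s. stationary B h \<Longrightarrow> mdp_payoff B m \<rho> \<alpha>h h $ s \<le> mdp_payoff B m \<rho> \<alpha>h hs $ s"
    and bound: "\<And>s b. b \<in> B s \<Longrightarrow>
      (\<Sum>s'\<in>UNIV. (m s' s b / N + (if s = s' then 1 else 0)) * \<rho> s' (bs s')) \<le> \<rho> s b"
    and h: "stationary B h"
  shows "mdp_payoff B m \<rho> \<alpha> h $ s \<le> mdp_payoff B m \<rho> \<alpha> hs $ s"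
proof -
  have hs_payoff: "mdp_payoff B m \<rho> a hs $ s = \<rho> s (bs s) / a" if "0 < a" for a s
    using mdp_payoff_absorbing[OF hs bs] absorbing that by (simp add: hs_bs)
  have opt_hs: "mdp_payoff B m \<rho> \<alpha>h h $ s \<le> \<rho> s (bs s) / \<alpha>h" if "stationary B h" for h s
    using opt[OF that] hs_payoff \<open>0 < \<alpha>\<close> \<open>\<alpha> \<le> \<alpha>h\<close> by simp
  define u where "u j = \<rho> j (bs j)" for j
  have "\<rho> s b + (\<Sum>j\<in>UNIV. m j s b * (\<chi> j. u j / \<alpha>)$j) \<le> \<alpha> * (\<chi> j. u j / \<alpha>)$s"
    if b: "b \<in> B s" for s b
  proof -
    define M where "M = (\<Sum>j\<in>UNIV. m j s b * u j)"
    have "\<alpha>h * (\<rho> s b - u s) \<le> - M"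
      using one_shot_deviation[OF bs absorbing _ opt_hs b] \<open>\<alpha> \<le> \<alpha>h\<close> \<open>0 < \<alpha>\<close>
      by (simp add: M_def u_def algebra_simps)
    moreover have "(\<Sum>s'\<in>UNIV. (m s' s b / N + (if s = s' then 1 else 0)) * u s') = M / N + u s"
      by (simp add: M_def distrib_right sum.distrib sum_divide_distrib flip: of_bool_def)
    then have "M / N \<le> \<rho> s b - u s"
      using bound[OF b] by (simp add: u_def)
    ultimately have "\<alpha> * (\<rho> s b - u s) \<le> - M"
      using discount_bound_mono \<open>0 < N\<close> \<open>0 < \<alpha>\<close> \<open>\<alpha> \<le> \<alpha>h\<close> by blast
    then have "M / \<alpha> \<le> u s - \<rho> s b"
      using \<open>0 < \<alpha>\<close> by (simp add: field_simps)
    then show ?thesis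
      using \<open>0 < \<alpha>\<close> by (simp add: M_def sum_divide_distrib)
  qed
  from mdp_payoff_le_supersolution[OF \<open>0 < \<alpha>\<close> h this] show ?thesis
    using hs_payoff \<open>0 < \<alpha>\<close> by (simp add: u_def)
qed

end

lemma ctmdp_fix_second:
  assumes "ctsg A1 A2 mu" and "\<And>s. b s \<in> A2 s"
  shows "ctmdp A1 (\<lambda>s' s a. mu s' s a (b s))"
  using assms by (unfold_locales) (auto simp: ctsg_def)

lemma ctmdp_fix_first:
  assumes "ctsg A1 A2 mu" and "\<And>s. a s \<in> A1 s"
  shows "ctmdp A2 (\<lambda>s' s c. mu s' s (a s) c)"
  using assms by (unfold_locales) (auto simp: ctsg_def)

lemma genQ_rew_fix_second:
  assumes "ctsg A1 A2 mu" and g: "stationary A2 g" and "\<And>s. b s \<in> A2 s" and "\<And>s. g s (b s) = 1"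
  shows "genQ A1 A2 mu f g = mdp_gen A1 (\<lambda>s' s a. mu s' s a (b s)) f"
    and "rew A1 A2 r f g = mdp_rew A1 (\<lambda>s a. r s a (b s)) f"
proof -
  have "(\<Sum>c\<in>A2 s. g s c * x c) = x (b s)" for s x
    using assms by (intro stationary_point_mass_sum) (auto simp: ctsg_def)
  then have pure: "(\<Sum>c\<in>A2 s. f s a * g s c * x c) = f s a * x (b s)" for s a x
    by (simp add: mult.assoc flip: sum_distrib_left)
  show "genQ A1 A2 mu f g = mdp_gen A1 (\<lambda>s' s a. mu s' s a (b s)) f"
    by (simp add: genQ_def mdp_gen_def pure)
  show "rew A1 A2 r f g = mdp_rew A1 (\<lambda>s a. r s a (b s)) f"
    by (simp add: rew_def mdp_rew_def pure)
qed

lemma genQ_rew_fix_first: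
  assumes "ctsg A1 A2 mu" and f: "stationary A1 f" and "\<And>s. a s \<in> A1 s" and "\<And>s. f s (a s) = 1"
  shows "genQ A1 A2 mu f g = mdp_gen A2 (\<lambda>s' s c. mu s' s (a s) c) g"
    and "rew A1 A2 r f g = mdp_rew A2 (\<lambda>s c. r s (a s) c) g"
proof -
  have pure: "(\<Sum>x\<in>A1 s. f s x * y x) = y (a s)" for s y
    using assms by (intro stationary_point_mass_sum) (auto simp: ctsg_def)
  show "genQ A1 A2 mu f g = mdp_gen A2 (\<lambda>s' s c. mu s' s (a s) c) g"
    using pure[of s "\<lambda>x. \<Sum>c\<in>A2 s. g s c * mu s' s x c" for s s']
    by (simp add: genQ_def mdp_gen_def sum_distrib_left mult.assoc)
  show "rew A1 A2 r f g = mdp_rew A2 (\<lambda>s c. r s (a s) c) g"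
    using pure[of s "\<lambda>x. \<Sum>c\<in>A2 s. g s c * r s x c" for s]
    by (simp add: rew_def mdp_rew_def sum_distrib_left mult.assoc)
qed

lemma disc_payoff_fix_second:
  assumes "ctsg A1 A2 mu" and "stationary A2 g" and "\<And>s. b s \<in> A2 s" and "\<And>s. g s (b s) = 1"
  shows "disc_payoff A1 A2 mu r \<alpha> f g
    = mdp_payoff A1 (\<lambda>s' s a. mu s' s a (b s)) (\<lambda>s a. r s a (b s)) \<alpha> f"
  using genQ_rew_fix_second[OF assms] by (simp add: disc_payoff_def mdp_payoff_def)

lemma disc_payoff_fix_first:
  assumes "ctsg A1 A2 mu" and "stationary A1 f" and "\<And>s. a s \<in> A1 s" and "\<And>s. f s (a s) = 1"
  shows "disc_payoff A1 A2 mu r \<alpha> f g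
    = mdp_payoff A2 (\<lambda>s' s c. mu s' s (a s) c) (\<lambda>s c. r s (a s) c) \<alpha> g"
  using genQ_rew_fix_first[OF assms] by (simp add: disc_payoff_def mdp_payoff_def)

theorem theorem6:
  fixes A1 :: "'s::finite \<Rightarrow> 'a set" and A2 :: "'s \<Rightarrow> 'b set"
    and mu :: "'s \<Rightarrow> 's \<Rightarrow> 'a \<Rightarrow> 'b \<Rightarrow> real"
    and r1 r2 :: "'s \<Rightarrow> 'a \<Rightarrow> 'b \<Rightarrow> real"
    and fs :: "'s \<Rightarrow> 'a \<Rightarrow> real" and gs :: "'s \<Rightarrow> 'b \<Rightarrow> real"
    and a1s :: "'s \<Rightarrow> 'a" and a2s :: "'s \<Rightarrow> 'b"
    and \<alpha>h :: real
  assumes game: "ctsg A1 A2 mu"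
    and alpha_pos: "\<alpha>h > 0"
    and eq: "disc_nash A1 A2 mu r1 r2 \<alpha>h fs gs"
    and norm_pos: "mu_norm A1 A2 mu > 0"
    and N1: "\<forall>s. a1s s \<in> A1 s \<and> a2s s \<in> A2 s \<and> fs s (a1s s) = 1 \<and> gs s (a2s s) = 1"
    and N2: "genQ A1 A2 mu fs gs = 0"
    and N3a: "\<forall>s. \<forall>a1\<in>A1 s. r1 s a1 (a2s s) \<ge>
               (\<Sum>s'\<in>UNIV. (mu s' s a1 (a2s s) / mu_norm A1 A2 mu + (if s = s' then 1 else 0))
                             * r1 s' (a1s s') (a2s s'))"
    and N3b: "\<forall>s. \<forall>a2\<in>A2 s. r2 s (a1s s) a2 \<ge>
               (\<Sum>s'\<in>UNIV. (mu s' s (a1s s) a2 / mu_norm A1 A2 mu + (if s = s' then 1 else 0))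
                             * r2 s' (a1s s') (a2s s'))"
  shows "blackwell_nash A1 A2 mu r1 r2 fs gs"
proof -
  have stf: "stationary A1 fs" and stg: "stationary A2 gs"
    using eq by (simp_all add: disc_nash_def)
  have a1: "\<And>s. a1s s \<in> A1 s" "\<And>s. fs s (a1s s) = 1" and a2: "\<And>s. a2s s \<in> A2 s" "\<And>s. gs s (a2s s) = 1"
    using N1 by auto
  interpret P1: ctmdp A1 "\<lambda>s' s a. mu s' s a (a2s s)"
    by (rule ctmdp_fix_second[OF game a2(1)])
  interpret P2: ctmdp A2 "\<lambda>s' s c. mu s' s (a1s s) c"
    by (rule ctmdp_fix_first[OF game a1(1)])
  have absorbing: "mu s' s (a1s s) (a2s s) = 0" for s s'
    using arg_cong[OF N2, of "\<lambda>Q. Q$s$s'"] stationary_point_mass_sum[OF stf P1.finite_actions a1]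
    by (simp add: genQ_rew_fix_second[OF game stg a2] mdp_gen_def)
  note pay1 = disc_payoff_fix_second[OF game stg a2] and pay2 = disc_payoff_fix_first[OF game stf a1]
  show ?thesis
    unfolding blackwell_nash_def disc_nash_def
  proof (intro exI[of _ \<alpha>h] conjI allI impI alpha_pos stf stg)
    fix \<alpha> f g s
    assume "0 < \<alpha> \<and> \<alpha> \<le> \<alpha>h"
    then have \<alpha>: "0 < \<alpha>" "\<alpha> \<le> \<alpha>h" by auto
    show "disc_payoff A1 A2 mu r1 \<alpha> f gs $ s \<le> disc_payoff A1 A2 mu r1 \<alpha> fs gs $ s" if "stationary A1 f"
      unfolding pay1
      by (rule P1.absorbing_optimal_small_discount[OF stf a1 absorbing \<alpha> norm_pos _ _ that])
        (use eq N3a in \<open>auto simp: disc_nash_def pay1\<close>)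
    show "disc_payoff A1 A2 mu r2 \<alpha> fs g $ s \<le> disc_payoff A1 A2 mu r2 \<alpha> fs gs $ s" if "stationary A2 g"
      unfolding pay2
      by (rule P2.absorbing_optimal_small_discount[OF stg a2 absorbing \<alpha> norm_pos _ _ that])
        (use eq N3b in \<open>auto simp: disc_nash_def pay2\<close>)
  qed
qed

end
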